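(* Let $\mathbb{H}$ be a real Hilbert space, $\mathbf{x}$ a random vector in $\mathbb{H}$ with $\mathbb{E}[\|\mathbf{x}\|^2]<\infty$, and $\mathcal{S}\boldsymbol{\theta}=\mathbb{E}[\langle\boldsymbol{\theta},\mathbf{x}\rangle\mathbf{x}]$. Assume $\mathcal{S}$ has an orthonormal basis $(\mathbf{e}_i)$ of eigenvectors with eigenvalues $0<\lambda_i<\tfrac12$. Let $\gamma\in(0,1)$ and $\mathcal{T}=\mathrm{Id}-\gamma\mathcal{S}$. Let $(t_n)_{n\ge1}$ be positive with $\sum_n\frac{1}{nt_n}<\infty$, let $\boldsymbol{\theta}\in\mathbb{H}$ and $0\le\kappa<\beta$. If $\|\mathcal{T}^n\boldsymbol{\theta}\|_\kappa^2\le\frac{1}{n^{\beta-\kappa}t_n}$ for all $n\ge1$, then $\|\boldsymbol{\theta}\|_\beta^2<\infty$.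
   Context: For $\boldsymbol{\theta}=\sum_i\theta_i\mathbf{e}_i$ and $\beta\in\mathbb{R}$, $\|\boldsymbol{\theta}\|_\beta^2:=\sum_i\lambda_i^{-\beta}\theta_i^2\in[0,\infty]$. *)

theory Defs
  imports "HOL-Probability.Probability"
begin

definition cov_op :: "'w measure \<Rightarrow> ('w \<Rightarrow> 'a::{real_inner, complete_space, second_countable_topology}) \<Rightarrow> 'a \<Rightarrow> 'a" where
  "cov_op M x \<theta> = (LINT \<omega>|M. (inner \<theta> (x \<omega>)) *\<^sub>R x \<omega>)"

definition wnorm2 :: "('i \<Rightarrow> real) \<Rightarrow> ('i \<Rightarrow> 'a::real_inner) \<Rightarrow> real \<Rightarrow> 'a \<Rightarrow> ennreal" where
  "wnorm2 lam e \<beta> \<theta> = (\<Sum>\<^sub>\<infinity>i. ennreal (lam i powr (-\<beta>) * (inner \<theta> (e i))\<^sup>2))"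

end

theory Submission
  imports Defs
begin

(* In the eigenbasis the iterates have coordinates (1 - \<gamma> \<lambda>_i)^n \<theta>_i, so with a = \<beta> - \<kappa> the
   hypothesis reads  sum_i \<lambda>_i^(-\<kappa>) (1 - \<gamma> \<lambda>_i)^(2n) \<theta>_i^2 \<le> 1 / (n^a t_n).  Multiplying by
   n^(a-1) and summing over n bounds  sum_i \<lambda>_i^(-\<kappa>) \<theta>_i^2 sum_n n^(a-1) (1 - \<gamma> \<lambda>_i)^(2n)  by
   sum_n 1 / (n t_n) < \<infinity>.  The inner sum over n is at least a constant times \<lambda>_i^(-a): the block
   1/(4\<lambda>_i) < n \<le> 1/(2\<lambda>_i) alone contributes that much, since there (1 - \<gamma> \<lambda>_i)^(2n) \<ge> e^(-4). *)

(* The Bochner integrability criteria of the library are stated for the class banach, which a type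
   of sort {real_normed_vector, complete_space} need not belong to; its square does, and embedding
   g as (g, 0) transfers the criteria. *)

instance prod :: ("{real_normed_vector, complete_space}", "{real_normed_vector, complete_space}") banach ..

lemma integrable_bound_complete:
  fixes f :: "'a \<Rightarrow> real"
    and g :: "'a \<Rightarrow> 'b::{real_normed_vector, complete_space, second_countable_topology}"
  assumes "integrable M f" and "g \<in> borel_measurable M" and "AE x in M. norm (g x) \<le> f x"
  shows "integrable M g"
proof -
  have "integrable M (\<lambda>x. (g x, 0::'b))"
    using assms(2,3) by (intro Bochner_Integration.integrable_bound[OF assms(1)]) auto
  then have "integrable M (\<lambda>x. fst (g x, 0::'b))"
    by (rule integrable_bounded_linear[OF bounded_linear_fst])
  then show ?thesis
    by simp
qed

lemma inner_cov_op:
  assumes "x \<in> borel_measurable M" and "integrable M (\<lambda>\<omega>. (norm (x \<omega>))\<^sup>2)"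
  shows "inner (cov_op M x v) w = (LINT \<omega>|M. inner v (x \<omega>) * inner (x \<omega>) w)"
proof -
  have "integrable M (\<lambda>\<omega>. inner v (x \<omega>) *\<^sub>R x \<omega>)"
  proof (rule integrable_bound_complete)
    show "integrable M (\<lambda>\<omega>. norm v * (norm (x \<omega>))\<^sup>2)"
      using assms(2) by simp
    show "(\<lambda>\<omega>. inner v (x \<omega>) *\<^sub>R x \<omega>) \<in> borel_measurable M"
      using assms(1) by measurable
    show "AE \<omega> in M. norm (inner v (x \<omega>) *\<^sub>R x \<omega>) \<le> norm v * (norm (x \<omega>))\<^sup>2"
      by (auto simp: power2_eq_square mult.assoc[symmetric] intro!: mult_right_mono Cauchy_Schwarz_ineq2)
  qed
  then show ?thesis
    by (simp add: cov_op_def flip: integral_inner_left)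
qed

lemma inner_cov_op_eigenvector:
  assumes "x \<in> borel_measurable M" and "integrable M (\<lambda>\<omega>. (norm (x \<omega>))\<^sup>2)"
    and "cov_op M x e = l *\<^sub>R e"
  shows "inner (cov_op M x v) e = l * inner v e"
proof -
  have "inner (cov_op M x v) e = inner (cov_op M x e) v"
    unfolding inner_cov_op[OF assms(1,2)] by (simp add: inner_commute mult.commute)
  then show ?thesis
    using assms(3) by (simp add: inner_commute)
qed

lemma inner_funpow_eigen:
  assumes "\<And>v. inner (A v) e = \<mu> * inner v e"
  shows "inner ((A ^^ n) v) e = \<mu> ^ n * inner v e"
  by (induction n) (simp_all add: assms)

lemma inner_gradient_iterate_eigenvector:
  assumes "x \<in> borel_measurable M" and "integrable M (\<lambda>\<omega>. (norm (x \<omega>))\<^sup>2)"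
    and "cov_op M x e = l *\<^sub>R e"
  shows "inner (((\<lambda>v. v - \<gamma> *\<^sub>R cov_op M x v) ^^ n) \<theta>) e = (1 - \<gamma> * l) ^ n * inner \<theta> e"
  by (rule inner_funpow_eigen)
    (simp add: inner_diff_left inner_cov_op_eigenvector[OF assms] algebra_simps)

lemma sum_le_of_wnorm2_le:
  assumes "finite F" and "wnorm2 lam e \<beta> \<theta> \<le> ennreal B" and "0 \<le> B"
  shows "(\<Sum>i\<in>F. lam i powr (-\<beta>) * (inner \<theta> (e i))\<^sup>2) \<le> B"
proof -
  have "ennreal (\<Sum>i\<in>F. lam i powr (-\<beta>) * (inner \<theta> (e i))\<^sup>2)
      = (\<Sum>\<^sub>\<infinity>i\<in>F. ennreal (lam i powr (-\<beta>) * (inner \<theta> (e i))\<^sup>2))"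
    using assms(1) by (simp add: sum_ennreal)
  also have "\<dots> \<le> wnorm2 lam e \<beta> \<theta>"
    unfolding wnorm2_def by (rule infsum_mono_neutral) (simp_all add: nonneg_summable_on_complete)
  also have "\<dots> \<le> ennreal B"
    by (fact assms(2))
  finally show ?thesis
    using assms(3) by (simp add: ennreal_le_iff)
qed

lemma wnorm2_le:
  assumes "\<And>F. finite F \<Longrightarrow> (\<Sum>i\<in>F. lam i powr (-\<beta>) * (inner \<theta> (e i))\<^sup>2) \<le> B"
  shows "wnorm2 lam e \<beta> \<theta> \<le> ennreal B"
  unfolding wnorm2_def
proof (rule infsum_le_finite_sums)
  fix F :: "'a set" assume "finite F"
  then show "(\<Sum>i\<in>F. ennreal (lam i powr (-\<beta>) * (inner \<theta> (e i))\<^sup>2)) \<le> ennreal B"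
    using assms by (simp add: sum_ennreal ennreal_leI)
qed (simp add: nonneg_summable_on_complete)

lemma exp_le_one_minus_power:
  fixes y :: real
  assumes "0 \<le> y" and "y \<le> 1/2"
  shows "exp (- 2 * m * y) \<le> (1 - y) ^ m"
proof -
  have "- 2 * y \<le> ln (1 - y)"
  proof -
    have "y\<^sup>2 \<le> y / 2"
      using mult_left_mono[of "2 * y" 1 y] assms by (simp add: power2_eq_square)
    then show ?thesis
      using ln_one_minus_pos_lower_bound[OF assms] by linarith
  qed
  then have "exp (m * (- 2 * y)) \<le> exp (m * ln (1 - y))"
    by (intro exp_mono mult_left_mono) auto
  also have "\<dots> = (1 - y) ^ m"
    using assms by (simp add: exp_of_nat_mult)
  finally show ?thesis
    by (simp add: mult_ac)
qed

lemma nat_between_half_and_whole: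
  fixes r :: real
  assumes "1 \<le> r"
  obtains K :: nat where "1 \<le> K" and "r \<le> 2 * K" and "K \<le> r"
proof -
  have "real (nat \<lfloor>r\<rfloor>) = \<lfloor>r\<rfloor>" and "1 \<le> \<lfloor>r\<rfloor>"
    using assms by simp_all
  then show thesis
    by (intro that[of "nat \<lfloor>r\<rfloor>"]) linarith+
qed

lemma powr_neg_le_weighted_geometric_sum:
  fixes l g a :: real
  assumes l: "0 < l" "l \<le> 1/2" and g: "0 \<le> g" "g \<le> 1" and a: "0 < a" and N: "1 / l < N"
  shows "l powr (-a) \<le> 2 * exp 4 * 4 powr a * (\<Sum>n<N. real n powr (a - 1) * (1 - g * l) ^ (2 * n))"
proof -
  have gl: "0 \<le> g * l" "g * l \<le> 1/2"
  proof -
    have "g * l \<le> l"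
      using g l by (intro mult_left_le_one_le) auto
    then show "g * l \<le> 1/2"
      using l by linarith
    show "0 \<le> g * l"
      using g l by simp
  qed
  obtain K :: nat where K: "1 \<le> K" "1 / (2 * l) \<le> 2 * K" "K \<le> 1 / (2 * l)"
    using nat_between_half_and_whole[of "1 / (2 * l)"] l by (auto simp: field_simps)
  have term_ge: "K powr a / (2 * K) * exp (-4) \<le> real n powr (a - 1) * (1 - g * l) ^ (2 * n)"
    if n: "n \<in> {K<..2 * K}" for n
  proof -
    have nK: "K \<le> real n" "real n \<le> 2 * K"
      using n by auto
    have "n * l \<le> 2 * K * l"
      using nK l by (intro mult_right_mono) auto
    also have "\<dots> \<le> 1"
      using K(3) l by (simp add: field_simps)
    finally have "n * l \<le> 1" .
    moreover have "g * (n * l) \<le> n * l"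
      using g l by (intro mult_left_le_one_le) auto
    ultimately have "- 4 \<le> - 2 * real (2 * n) * (g * l)"
      by (simp add: mult_ac)
    then have "exp (-4) \<le> exp (- 2 * real (2 * n) * (g * l))"
      by simp
    also have "\<dots> \<le> (1 - g * l) ^ (2 * n)"
      using gl by (rule exp_le_one_minus_power)
    finally have exp_le: "exp (-4) \<le> (1 - g * l) ^ (2 * n)" .
    have "K powr a / (2 * K) \<le> real n powr a / real n"
      using nK K(1) a by (intro frac_le powr_mono2) auto
    also have "\<dots> = real n powr (a - 1)"
      using nK K(1) by (simp add: powr_diff)
    finally show ?thesis
      using exp_le by (intro mult_mono) auto
  qed
  have "l powr (-a) = 2 * exp 4 * 4 powr a * (exp (-4) * (1 / (4 * l)) powr a / 2)"
    using l by (simp add: exp_minus powr_divide powr_mult powr_minus field_simps)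
  also have "\<dots> \<le> 2 * exp 4 * 4 powr a * (exp (-4) * K powr a / 2)"
    using K l a by (intro mult_left_mono divide_right_mono powr_mono2) auto
  also have "exp (-4) * K powr a / 2 = (\<Sum>n\<in>{K<..2 * K}. K powr a / (2 * K) * exp (-4))"
    using K(1) by simp
  also have "\<dots> \<le> (\<Sum>n\<in>{K<..2 * K}. real n powr (a - 1) * (1 - g * l) ^ (2 * n))"
    using term_ge by (rule sum_mono)
  also have "\<dots> \<le> (\<Sum>n<N. real n powr (a - 1) * (1 - g * l) ^ (2 * n))"
  proof (rule sum_mono2)
    have "real (2 * K) \<le> 1 / l"
      using K(3) l by (simp add: field_simps)
    then have "2 * K < N"
      using N by linarith
    then show "{K<..2 * K} \<subseteq> {..<N}"
      by auto
  qed (use gl in auto)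
  finally show ?thesis
    by simp
qed

lemma weighted_sum_le_of_decay:
  fixes lam c :: "'i \<Rightarrow> real" and t :: "nat \<Rightarrow> real"
  assumes F: "finite F" and lam: "\<And>i. i \<in> F \<Longrightarrow> 0 < lam i \<and> lam i \<le> 1/2"
    and \<gamma>: "0 \<le> \<gamma>" "\<gamma> \<le> 1" and \<kappa>\<beta>: "\<kappa> < \<beta>"
    and t: "\<And>n. 1 \<le> n \<Longrightarrow> 0 < t n" and summable: "summable (\<lambda>n. 1 / (real n * t n))"
    and decay: "\<And>n. 1 \<le> n \<Longrightarrow>
      (\<Sum>i\<in>F. lam i powr (-\<kappa>) * ((1 - \<gamma> * lam i) ^ n * c i)\<^sup>2) \<le> 1 / (real n powr (\<beta> - \<kappa>) * t n)"
  shows "(\<Sum>i\<in>F. lam i powr (-\<beta>) * (c i)\<^sup>2)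
    \<le> 2 * exp 4 * 4 powr (\<beta> - \<kappa>) * (\<Sum>n. 1 / (real n * t n))"
proof -
  define a where "a = \<beta> - \<kappa>"
  define C where "C = 2 * exp 4 * 4 powr a"
  define p where "p n = real n powr (a - 1)" for n :: nat
  obtain N :: nat where N: "(\<Sum>i\<in>F. 1 / lam i) < N"
    using reals_Archimedean2 by blast
  have lam_powr: "lam i powr (-a) \<le> C * (\<Sum>n<N. p n * (1 - \<gamma> * lam i) ^ (2 * n))"
    if i: "i \<in> F" for i
  proof -
    have "1 / lam i \<le> (\<Sum>i\<in>F. 1 / lam i)"
      using F i lam by (intro member_le_sum) (auto simp: less_imp_le)
    then show ?thesis
      unfolding C_def p_def a_def using lam[OF i] \<gamma> \<kappa>\<beta> N by (intro powr_neg_le_weighted_geometric_sum) auto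
  qed
  have "(\<Sum>i\<in>F. lam i powr (-\<beta>) * (c i)\<^sup>2) = (\<Sum>i\<in>F. lam i powr (-\<kappa>) * (c i)\<^sup>2 * lam i powr (-a))"
    unfolding a_def by (intro sum.cong) (simp_all add: powr_add[symmetric])
  also have "\<dots> \<le> (\<Sum>i\<in>F. lam i powr (-\<kappa>) * (c i)\<^sup>2 * (C * (\<Sum>n<N. p n * (1 - \<gamma> * lam i) ^ (2 * n))))"
    using lam_powr by (intro sum_mono mult_left_mono) auto
  also have "\<dots> = C * (\<Sum>n<N. p n * (\<Sum>i\<in>F. lam i powr (-\<kappa>) * ((1 - \<gamma> * lam i) ^ n * c i)\<^sup>2))"
    by (simp add: sum_distrib_left sum.swap[of _ F] power_mult_distrib power_mult[symmetric] mult_ac)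
  also have "\<dots> \<le> C * (\<Sum>n<N. 1 / (real n * t n))"
  proof (intro mult_left_mono sum_mono)
    fix n
    show "p n * (\<Sum>i\<in>F. lam i powr (-\<kappa>) * ((1 - \<gamma> * lam i) ^ n * c i)\<^sup>2) \<le> 1 / (real n * t n)"
    proof (cases "n = 0")
      case False
      then have "p n * (\<Sum>i\<in>F. lam i powr (-\<kappa>) * ((1 - \<gamma> * lam i) ^ n * c i)\<^sup>2)
          \<le> p n * (1 / (real n powr a * t n))"
        unfolding a_def p_def by (intro mult_left_mono decay) auto
      also have "\<dots> = 1 / (real n * t n)"
        using False t[of n] by (simp add: p_def powr_diff field_simps)
      finally show ?thesis .
    qed (simp add: p_def) \<comment> \<open>both sides vanish at n = 0, as 0 powr _ = 0 and 1 / 0 = 0\<close>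
  qed (simp add: C_def)
  also have "\<dots> \<le> C * (\<Sum>n. 1 / (real n * t n))"
  proof (intro mult_left_mono sum_le_suminf[OF summable])
    show "0 \<le> 1 / (real n * t n)" for n
      using t[of n] by (cases "n = 0") auto
  qed (auto simp: C_def)
  finally show ?thesis
    unfolding C_def a_def .
qed

theorem proposition3:
  fixes M :: "'w measure"
    and x :: "'w \<Rightarrow> 'a::{real_inner, complete_space, second_countable_topology}"
    and e :: "'i \<Rightarrow> 'a" and lam :: "'i \<Rightarrow> real"
    and \<gamma> \<kappa> \<beta> :: real and t :: "nat \<Rightarrow> real" and \<theta> :: 'a
  assumes "prob_space M"
    and "x \<in> borel_measurable M"
    and "integrable M (\<lambda>\<omega>. (norm (x \<omega>))\<^sup>2)"
    and "\<forall>i. norm (e i) = 1"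
    and "\<forall>i j. i \<noteq> j \<longrightarrow> inner (e i) (e j) = 0"
    and "closure (span (range e)) = UNIV"
    and "\<forall>i. cov_op M x (e i) = lam i *\<^sub>R e i"
    and "\<forall>i. 0 < lam i \<and> lam i < 1/2"
    and "0 < \<gamma>" and "\<gamma> < 1"
    and "\<forall>n\<ge>1. 0 < t n"
    and "summable (\<lambda>n. 1 / (real n * t n))"
    and "0 \<le> \<kappa>" and "\<kappa> < \<beta>"
    and "\<forall>n\<ge>1. wnorm2 lam e \<kappa> (((\<lambda>v. v - \<gamma> *\<^sub>R cov_op M x v) ^^ n) \<theta>)
                 \<le> ennreal (1 / (real n powr (\<beta> - \<kappa>) * t n))"
  shows "wnorm2 lam e \<beta> \<theta> < \<infinity>"
proof -
  have decay: "(\<Sum>i\<in>F. lam i powr (-\<kappa>) * ((1 - \<gamma> * lam i) ^ n * inner \<theta> (e i))\<^sup>2)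
      \<le> 1 / (real n powr (\<beta> - \<kappa>) * t n)" if "finite F" and "1 \<le> n" for F n
    using sum_le_of_wnorm2_le[OF that(1) assms(15)[rule_format, OF that(2)]] assms(11) that(2)
    by (simp add: inner_gradient_iterate_eigenvector[OF assms(2,3) assms(7)[rule_format]] less_imp_le)
  have lam_bounds: "0 < lam i \<and> lam i \<le> 1/2" for i
    using assms(8) by (simp add: less_imp_le)
  have t_pos: "0 < t n" if "1 \<le> n" for n
    using assms(11) that by blast
  have "wnorm2 lam e \<beta> \<theta> \<le> ennreal (2 * exp 4 * 4 powr (\<beta> - \<kappa>) * (\<Sum>n. 1 / (real n * t n)))"
  proof (rule wnorm2_le)
    fix F :: "'i set"
    assume F: "finite F"
    show "(\<Sum>i\<in>F. lam i powr (-\<beta>) * (inner \<theta> (e i))\<^sup>2)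
        \<le> 2 * exp 4 * 4 powr (\<beta> - \<kappa>) * (\<Sum>n. 1 / (real n * t n))"
      by (rule weighted_sum_le_of_decay[OF F lam_bounds less_imp_le[OF assms(9)] less_imp_le[OF assms(10)]
            assms(14) t_pos assms(12) decay[OF F]])
  qed
  also have "\<dots> < \<infinity>"
    by simp
  finally show ?thesis .
qed

end
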